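(* Let $d\ge1$ and $1<p_1<p<p_2<\infty$. Then there exists a Young function $\Phi$ with $L^\Phi(\mathbb R^d)=L^p(\mathbb R^d)$, $q_\Phi=p_1$ and $p_\Phi=p_2$.
   Context: A Young function is a convex function $\Phi:[0,\infty)\to[0,\infty)$ with $\Phi(0)=0$, $\Phi(t)>0$ for $t>0$, and $\lim_{t\to\infty}\Phi(t)=\infty$. $\Phi'$ denotes the right derivative of $\Phi$. The Lebesgue exponents of $\Phi$ are $p_\Phi=\sup_{t>0}\frac{t\Phi'(t)}{\Phi(t)}$ and $q_\Phi=\inf_{t>0}\frac{t\Phi'(t)}{\Phi(t)}$. For a measurable $f$ on $\mathbb R^d$, $\rho_\Phi(f)=\int_{\mathbb R^d}\Phi(|f(x)|)\,dx$, the Luxemburg norm is $\|f\|_{L^\Phi}=\inf\{\lambda>0:\rho_\Phi(f/\lambda)\le1\}$, and the Orlicz space $L^\Phi(\mathbb R^d)$ consists of (classes of) measurable $f$ with $\|f\|_{L^\Phi}<\infty$. *)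

theory Defs
  imports "HOL-Analysis.Analysis"
begin

definition young_function :: "(real \<Rightarrow> real) \<Rightarrow> bool" where
  "young_function \<Phi> \<longleftrightarrow>
     convex_on {0..} \<Phi> \<and> \<Phi> 0 = 0 \<and> (\<forall>t>0. \<Phi> t > 0) \<and> filterlim \<Phi> at_top at_top"

definition right_deriv :: "(real \<Rightarrow> real) \<Rightarrow> real \<Rightarrow> real" where
  "right_deriv \<Phi> t = Lim (at_right t) (\<lambda>s. (\<Phi> s - \<Phi> t) / (s - t))"

text \<open>Lebesgue exponents (as extended reals, so that sup/inf are always meaningful).\<close>
definition upper_exponent :: "(real \<Rightarrow> real) \<Rightarrow> ereal" where
  "upper_exponent \<Phi> = (SUP t\<in>{0<..}. ereal (t * right_deriv \<Phi> t / \<Phi> t))"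

definition lower_exponent :: "(real \<Rightarrow> real) \<Rightarrow> ereal" where
  "lower_exponent \<Phi> = (INF t\<in>{0<..}. ereal (t * right_deriv \<Phi> t / \<Phi> t))"

definition orlicz_modular :: "(real \<Rightarrow> real) \<Rightarrow> ('a::euclidean_space \<Rightarrow> real) \<Rightarrow> ennreal" where
  "orlicz_modular \<Phi> f = (\<integral>\<^sup>+ x. ennreal (\<Phi> \<bar>f x\<bar>) \<partial>lebesgue)"

definition luxemburg_norm :: "(real \<Rightarrow> real) \<Rightarrow> ('a::euclidean_space \<Rightarrow> real) \<Rightarrow> ennreal" where
  "luxemburg_norm \<Phi> f =
     (INF c\<in>{c::real. c > 0 \<and> orlicz_modular \<Phi> (\<lambda>x. f x / c) \<le> 1}. ennreal c)"

definition orlicz_space :: "(real \<Rightarrow> real) \<Rightarrow> ('a::euclidean_space \<Rightarrow> real) set" where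
  "orlicz_space \<Phi> = {f \<in> borel_measurable lebesgue. luxemburg_norm \<Phi> f < \<infinity>}"

definition Lp_space :: "real \<Rightarrow> ('a::euclidean_space \<Rightarrow> real) set" where
  "Lp_space p = {f \<in> borel_measurable lebesgue. (\<integral>\<^sup>+ x. ennreal (\<bar>f x\<bar> powr p) \<partial>lebesgue) < \<infinity>}"

end

theory Submission
  imports Defs
begin

text \<open>
  The Young function is a power perturbed on the logarithmic scale, \<Phi>(t) = t^p exp(G(ln t))
  (perturbed_power), where G (log_weight) is a primitive of h(s) = u k(s/L) for s \<ge> 0 and
  h(s) = v k(s/L) for s < 0 (deviation), and k(x) = x exp((1 - x^2)/2) (bump) is odd with values
  in [-1, 1] and k(1) = 1.
  Then t \<Phi>'(t) / \<Phi>(t) = p + h(ln t) has supremum p + u and infimum p - v. As k has a bounded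
  primitive, G is bounded, so \<Phi> is comparable to t^p and the Orlicz space is L^p.
  Convexity means that \<Phi>'(e^s) = exp((p - 1) s + G(s)) (p + h(s)) increases in s; its derivative
  is exp(...) ((p + h - 1)(p + h) + h'), where p + h \<ge> p - v > 1 and h' = O(1/L), so it is
  nonnegative once L is large.
\<close>

section \<open>Derivatives and Orlicz spaces of power type\<close>

lemma DERIV_imp_right_deriv:
  assumes "(f has_real_derivative D) (at t)"
  shows "right_deriv f t = D"
proof -
  have "((\<lambda>s. (f s - f t) / (s - t)) \<longlongrightarrow> D) (at t)"
    using assms by (simp add: has_field_derivative_iff)
  then have "((\<lambda>s. (f s - f t) / (s - t)) \<longlongrightarrow> D) (at_right t)"
    by (rule tendsto_mono [rotated]) (simp add: at_le)
  then show ?thesis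
    unfolding right_deriv_def by (intro tendsto_Lim) auto
qed

lemma has_real_derivative_zero_at_zeroI:
  fixes f :: "real \<Rightarrow> real"
  assumes vanish: "\<And>t. t \<le> 0 \<Longrightarrow> f t = 0"
    and bound: "\<And>t. 0 < t \<Longrightarrow> \<bar>f t\<bar> \<le> C * t powr q" and "1 < q"
  shows "(f has_real_derivative 0) (at 0)"
proof -
  have "0 \<le> C"
    using bound [of 1] by simp
  have quotient_bound: "norm ((f t - f 0) / (t - 0)) \<le> C * \<bar>t\<bar> powr (q - 1)" for t
  proof (cases "0 < t")
    case True
    then have "\<bar>f t\<bar> / t \<le> C * t powr q / t"
      by (intro divide_right_mono bound) auto
    moreover have "t powr (q - 1) = t powr q / t"
      using True by (simp add: powr_diff)
    ultimately show ?thesis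
      using True vanish [of 0] by simp
  next
    case False
    with vanish \<open>0 \<le> C\<close> show ?thesis
      by simp
  qed
  have "((\<lambda>t. C * \<bar>t\<bar> powr (q - 1)) \<longlongrightarrow> C * 0) (at 0)"
    using \<open>1 < q\<close>
    by (intro tendsto_mult tendsto_const tendsto_zero_powrI tendsto_rabs_zero tendsto_ident_at) auto
  then have "((\<lambda>t. C * \<bar>t\<bar> powr (q - 1)) \<longlongrightarrow> 0) (at 0)"
    by simp
  then show ?thesis
    unfolding has_field_derivative_iff
    by (rule Lim_null_comparison [OF always_eventually, rotated]) (use quotient_bound in auto)
qed

lemma luxemburg_norm_finite_iff:
  "luxemburg_norm \<Phi> f < \<infinity> \<longleftrightarrow> (\<exists>c>0. orlicz_modular \<Phi> (\<lambda>x. f x / c) \<le> 1)"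
proof
  assume "luxemburg_norm \<Phi> f < \<infinity>"
  then show "\<exists>c>0. orlicz_modular \<Phi> (\<lambda>x. f x / c) \<le> 1"
    unfolding luxemburg_norm_def
    by (metis (no_types, lifting) Collect_empty_eq INF_empty infinity_ennreal_def less_irrefl)
next
  assume "\<exists>c>0. orlicz_modular \<Phi> (\<lambda>x. f x / c) \<le> 1"
  then obtain c where "c > 0" "orlicz_modular \<Phi> (\<lambda>x. f x / c) \<le> 1"
    by blast
  then have "luxemburg_norm \<Phi> f \<le> ennreal c"
    unfolding luxemburg_norm_def by (intro INF_lower) simp
  also have "\<dots> < \<infinity>"
    by simp
  finally show "luxemburg_norm \<Phi> f < \<infinity>" .
qed

lemma Lp_space_subset_orlicz_space:
  assumes upper: "\<And>t. 0 \<le> t \<Longrightarrow> \<Phi> t \<le> b * t powr p" and "0 \<le> b" "0 < p"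
  shows "Lp_space p \<subseteq> (orlicz_space \<Phi> :: ('a::euclidean_space \<Rightarrow> real) set)"
proof
  fix f :: "'a \<Rightarrow> real"
  assume "f \<in> Lp_space p"
  then have meas: "f \<in> borel_measurable lebesgue"
    and "(\<integral>\<^sup>+ x. ennreal (\<bar>f x\<bar> powr p) \<partial>lebesgue) < \<infinity>"
    by (auto simp: Lp_space_def)
  then obtain r where "0 \<le> r" and r: "(\<integral>\<^sup>+ x. ennreal (\<bar>f x\<bar> powr p) \<partial>lebesgue) = ennreal r"
    using less_top_ennreal by (metis infinity_ennreal_def)
  define c where "c = (b * r + 1) powr (1 / p)"
  have "0 < b * r + 1"
    using \<open>0 \<le> b\<close> \<open>0 \<le> r\<close> by (simp add: add_nonneg_pos)
  then have "0 < c" and c_powr: "c powr p = b * r + 1"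
    using \<open>0 < p\<close> by (simp_all add: c_def powr_powr)
  have "orlicz_modular \<Phi> (\<lambda>x. f x / c) \<le>
      (\<integral>\<^sup>+ x. ennreal (b / c powr p) * ennreal (\<bar>f x\<bar> powr p) \<partial>lebesgue)"
    unfolding orlicz_modular_def
  proof (rule nn_integral_mono)
    fix x
    have "\<Phi> \<bar>f x / c\<bar> \<le> b * (\<bar>f x\<bar> powr p / c powr p)"
      using upper [of "\<bar>f x / c\<bar>"] \<open>0 < c\<close> by (simp add: powr_divide)
    then show "ennreal (\<Phi> \<bar>f x / c\<bar>) \<le> ennreal (b / c powr p) * ennreal (\<bar>f x\<bar> powr p)"
      using \<open>0 \<le> b\<close> by (simp add: ennreal_mult' [symmetric] ennreal_leI)
  qed
  also have "\<dots> = ennreal (b / c powr p) * (\<integral>\<^sup>+ x. ennreal (\<bar>f x\<bar> powr p) \<partial>lebesgue)"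
    by (rule nn_integral_cmult) (use meas in measurable)
  also have "\<dots> = ennreal (b / c powr p) * ennreal r"
    by (simp only: r)
  also have "\<dots> = ennreal (b * r / (b * r + 1))"
    using \<open>0 \<le> b\<close> \<open>0 \<le> r\<close> by (simp add: c_powr ennreal_mult' [symmetric])
  also have "\<dots> \<le> 1"
    using \<open>0 < b * r + 1\<close> by simp
  finally have "orlicz_modular \<Phi> (\<lambda>x. f x / c) \<le> 1" .
  with \<open>0 < c\<close> meas show "f \<in> orlicz_space \<Phi>"
    unfolding orlicz_space_def using luxemburg_norm_finite_iff by blast
qed

lemma orlicz_space_subset_Lp_space:
  assumes lower: "\<And>t. 0 \<le> t \<Longrightarrow> a * t powr p \<le> \<Phi> t" and "0 < a"
  shows "(orlicz_space \<Phi> :: ('a::euclidean_space \<Rightarrow> real) set) \<subseteq> Lp_space p"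
proof
  fix f :: "'a \<Rightarrow> real"
  assume "f \<in> orlicz_space \<Phi>"
  then have meas: "f \<in> borel_measurable lebesgue" and "luxemburg_norm \<Phi> f < \<infinity>"
    by (simp_all add: orlicz_space_def)
  then obtain c where "0 < c" and modular: "orlicz_modular \<Phi> (\<lambda>x. f x / c) \<le> 1"
    using luxemburg_norm_finite_iff by blast
  have "(\<integral>\<^sup>+ x. ennreal (\<bar>f x\<bar> powr p) \<partial>lebesgue) =
      (\<integral>\<^sup>+ x. ennreal (c powr p / a) * ennreal (a * \<bar>f x / c\<bar> powr p) \<partial>lebesgue)"
    using \<open>0 < c\<close> \<open>0 < a\<close>
    by (intro nn_integral_cong) (simp add: ennreal_mult' [symmetric] powr_divide)
  also have "\<dots> = ennreal (c powr p / a) * (\<integral>\<^sup>+ x. ennreal (a * \<bar>f x / c\<bar> powr p) \<partial>lebesgue)"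
    by (rule nn_integral_cmult) (use meas in measurable)
  also have "\<dots> \<le> ennreal (c powr p / a) * orlicz_modular \<Phi> (\<lambda>x. f x / c)"
    unfolding orlicz_modular_def using lower by (intro mult_left_mono nn_integral_mono ennreal_leI) auto
  also have "\<dots> \<le> ennreal (c powr p / a)"
    using mult_left_mono [OF modular, of "ennreal (c powr p / a)"] by simp
  also have "\<dots> < \<infinity>"
    by simp
  finally show "f \<in> Lp_space p"
    using meas by (simp add: Lp_space_def)
qed

section \<open>The bump profile\<close>

definition bump :: "real \<Rightarrow> real" where
  "bump x = x * exp ((1 - x\<^sup>2) / 2)"

definition bump_integral :: "real \<Rightarrow> real" where
  "bump_integral x = exp (1 / 2) - exp ((1 - x\<^sup>2) / 2)"

lemma exp_half_le_2: "exp (1 / 2 :: real) \<le> 2"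
proof (rule power2_le_imp_le)
  have "(exp (1 / 2) :: real)\<^sup>2 = exp 1"
    by (simp add: power2_eq_square exp_add [symmetric])
  also have "\<dots> \<le> 2\<^sup>2"
    using exp_le by simp
  finally show "(exp (1 / 2) :: real)\<^sup>2 \<le> 2\<^sup>2" .
qed simp

lemma has_real_derivative_bump_integral: "(bump_integral has_real_derivative bump x) (at x)"
  unfolding bump_integral_def bump_def
  by (auto intro!: derivative_eq_intros simp: algebra_simps)

lemma has_real_derivative_bump:
  "(bump has_real_derivative (1 - x\<^sup>2) * exp ((1 - x\<^sup>2) / 2)) (at x)"
  unfolding bump_def
  by (auto intro!: derivative_eq_intros simp: algebra_simps power2_eq_square)

lemma bump_0 [simp]: "bump 0 = 0" and bump_integral_0 [simp]: "bump_integral 0 = 0"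
  by (simp_all add: bump_def bump_integral_def)

lemma bump_1 [simp]: "bump 1 = 1"
  by (simp add: bump_def)

lemma bump_minus: "bump (- x) = - bump x"
  by (simp add: bump_def)

lemma bump_nonneg: "0 \<le> x \<Longrightarrow> 0 \<le> bump x"
  by (simp add: bump_def)

lemma abs_bump_le_1: "\<bar>bump x\<bar> \<le> 1"
proof -
  have "1 + (x\<^sup>2 - 1) / 2 \<le> exp ((x\<^sup>2 - 1) / 2)"
    by (rule exp_ge_add_one_self)
  moreover have "\<bar>x\<bar> \<le> 1 + (x\<^sup>2 - 1) / 2"
    using sum_squares_ge_zero [of "\<bar>x\<bar> - 1" 0] by (simp add: power2_eq_square field_simps)
  ultimately have "\<bar>x\<bar> \<le> exp ((x\<^sup>2 - 1) / 2)"
    by linarith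
  then have "\<bar>x\<bar> * exp ((1 - x\<^sup>2) / 2) \<le> exp ((x\<^sup>2 - 1) / 2) * exp ((1 - x\<^sup>2) / 2)"
    by (rule mult_right_mono) simp
  also have "\<dots> = 1"
    by (simp add: exp_add [symmetric] add_divide_distrib [symmetric])
  finally show ?thesis
    by (simp add: bump_def abs_mult)
qed

lemma bump_integral_nonneg: "0 \<le> bump_integral x"
  by (simp add: bump_integral_def)

lemma bump_integral_le_2: "bump_integral x \<le> 2"
  using exp_half_le_2 exp_gt_zero [of "(1 - x\<^sup>2) / 2"] unfolding bump_integral_def by linarith

lemma bump_derivative_ge: "- 4 \<le> (1 - (x::real)\<^sup>2) * exp ((1 - x\<^sup>2) / 2)"
proof -
  have "x\<^sup>2 / 2 \<le> exp (x\<^sup>2 / 2)"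
    using exp_ge_add_one_self [of "x\<^sup>2 / 2"] by linarith
  then have "x\<^sup>2 * exp (- (x\<^sup>2 / 2)) \<le> 2"
    by (simp add: exp_minus field_simps)
  then have "x\<^sup>2 * exp (- (x\<^sup>2 / 2)) * exp (1 / 2) \<le> 2 * 2"
    using exp_half_le_2 by (intro mult_mono) auto
  also have "x\<^sup>2 * exp (- (x\<^sup>2 / 2)) * exp (1 / 2) = x\<^sup>2 * exp ((1 - x\<^sup>2) / 2)"
    by (simp add: exp_add [symmetric] diff_divide_distrib)
  finally have "x\<^sup>2 * exp ((1 - x\<^sup>2) / 2) \<le> 4"
    by simp
  moreover have "(1 - x\<^sup>2) * exp ((1 - x\<^sup>2) / 2) =
      exp ((1 - x\<^sup>2) / 2) - x\<^sup>2 * exp ((1 - x\<^sup>2) / 2)"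
    by (simp add: algebra_simps)
  moreover have "0 < exp ((1 - x\<^sup>2) / 2)"
    by simp
  ultimately show ?thesis
    by linarith
qed

section \<open>A perturbed power function\<close>

definition deviation :: "real \<Rightarrow> real \<Rightarrow> real \<Rightarrow> real \<Rightarrow> real" where
  "deviation u v L s = (if 0 \<le> s then u else v) * bump (s / L)"

definition log_weight :: "real \<Rightarrow> real \<Rightarrow> real \<Rightarrow> real \<Rightarrow> real" where
  "log_weight u v L s = (if 0 \<le> s then u else v) * (L * bump_integral (s / L))"

definition perturbed_power :: "real \<Rightarrow> real \<Rightarrow> real \<Rightarrow> real \<Rightarrow> real \<Rightarrow> real" where
  "perturbed_power p u v L t = (if t \<le> 0 then 0 else t powr p * exp (log_weight u v L (ln t)))"

lemma has_real_derivative_scaled_bump_integral: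
  assumes "0 < L"
  shows "((\<lambda>s. c * (L * bump_integral (s / L))) has_real_derivative c * bump (s / L)) (at s within S)"
proof -
  have "((\<lambda>s. bump_integral (s / L)) has_real_derivative bump (s / L) * (1 / L)) (at s within S)"
    by (rule DERIV_chain2 [OF has_real_derivative_bump_integral])
      (use assms in \<open>auto intro!: derivative_eq_intros\<close>)
  then show ?thesis
    using assms by (auto intro!: derivative_eq_intros)
qed

lemma has_real_derivative_log_weight:
  assumes "0 < L"
  shows "(log_weight u v L has_real_derivative deviation u v L s) (at s)"
proof -
  have "((\<lambda>s. if s \<in> {0..} then u * (L * bump_integral (s / L)) else v * (L * bump_integral (s / L)))
      has_derivative (if s \<in> {0..} then (*) (u * bump (s / L)) else (*) (v * bump (s / L))))
      (at s within {0..} \<union> {..<0})"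
    by (rule has_derivative_If_within_closures)
      (use has_real_derivative_scaled_bump_integral [OF assms] in \<open>auto simp: has_field_derivative_def\<close>)
  moreover have "{0..} \<union> {..<0} = (UNIV :: real set)"
    by auto
  moreover have "log_weight u v L =
      (\<lambda>s. if s \<in> {0..} then u * (L * bump_integral (s / L)) else v * (L * bump_integral (s / L)))"
    by (auto simp: fun_eq_iff log_weight_def)
  moreover have "(if s \<in> {0..} then (*) (u * bump (s / L)) else (*) (v * bump (s / L))) =
      (*) (deviation u v L s)"
    by (auto simp: deviation_def)
  ultimately show ?thesis
    by (simp add: has_field_derivative_def)
qed

lemma log_weight_bounds:
  assumes "0 < L" "0 \<le> u" "0 \<le> v"
  shows "0 \<le> log_weight u v L s" "log_weight u v L s \<le> 2 * L * (u + v)"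
proof -
  have "(if 0 \<le> s then u else v) * (L * bump_integral (s / L)) \<le> (u + v) * (L * 2)"
    using assms bump_integral_nonneg bump_integral_le_2 by (intro mult_mono) auto
  then show "log_weight u v L s \<le> 2 * L * (u + v)"
    by (simp add: log_weight_def algebra_simps)
  show "0 \<le> log_weight u v L s"
    using assms bump_integral_nonneg by (simp add: log_weight_def)
qed

lemma deviation_le:
  assumes "0 < L" "0 \<le> u" "0 \<le> v"
  shows "deviation u v L s \<le> u"
proof (cases "0 \<le> s")
  case True
  have "u * bump (s / L) \<le> u * 1"
    using assms abs_bump_le_1 [of "s / L"] by (intro mult_left_mono) auto
  with True show ?thesis
    by (simp add: deviation_def)
next
  case False
  then have "0 \<le> bump (- s / L)"
    using assms by (intro bump_nonneg) (simp add: divide_nonpos_pos)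
  then have "v * bump (s / L) \<le> 0"
    using assms by (simp add: bump_minus mult_nonneg_nonpos)
  with False assms show ?thesis
    by (simp add: deviation_def)
qed

lemma deviation_ge:
  assumes "0 < L" "0 \<le> u" "0 \<le> v"
  shows "- v \<le> deviation u v L s"
proof (cases "0 \<le> s")
  case True
  then have "0 \<le> u * bump (s / L)"
    using assms bump_nonneg [of "s / L"] by simp
  with True assms show ?thesis
    by (simp add: deviation_def)
next
  case False
  have "v * (- 1) \<le> v * bump (s / L)"
    using assms abs_bump_le_1 [of "s / L"] by (intro mult_left_mono) auto
  with False show ?thesis
    by (simp add: deviation_def)
qed

lemma deviation_at_L: "0 < L \<Longrightarrow> deviation u v L L = u"
  by (simp add: deviation_def)

lemma deviation_at_minus_L: "0 < L \<Longrightarrow> deviation u v L (- L) = - v"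
  by (simp add: deviation_def bump_minus)

lemma perturbed_power_bounds:
  assumes "0 < L" "0 \<le> u" "0 \<le> v" "0 \<le> t"
  shows "t powr p \<le> perturbed_power p u v L t"
    and "perturbed_power p u v L t \<le> exp (2 * L * (u + v)) * t powr p"
proof -
  have "1 \<le> exp (log_weight u v L (ln t))" "exp (log_weight u v L (ln t)) \<le> exp (2 * L * (u + v))"
    using log_weight_bounds [OF assms(1-3)] by auto
  then show "t powr p \<le> perturbed_power p u v L t"
    and "perturbed_power p u v L t \<le> exp (2 * L * (u + v)) * t powr p"
    using assms(4) by (auto simp: perturbed_power_def mult.commute intro: mult_left_mono)
qed

lemma has_real_derivative_perturbed_power:
  assumes "0 < L" "0 < t"
  shows "(perturbed_power p u v L has_real_derivative
           perturbed_power p u v L t * (p + deviation u v L (ln t)) / t) (at t)"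
proof -
  have "((\<lambda>t. t powr p * exp (log_weight u v L (ln t))) has_real_derivative
      p * t powr (p - 1) * exp (log_weight u v L (ln t)) +
      t powr p * (exp (log_weight u v L (ln t)) * (deviation u v L (ln t) * (1 / t)))) (at t)"
    using assms
    by (auto intro!: derivative_eq_intros DERIV_chain2 [OF has_real_derivative_log_weight])
  moreover have "p * t powr (p - 1) * exp (log_weight u v L (ln t)) +
      t powr p * (exp (log_weight u v L (ln t)) * (deviation u v L (ln t) * (1 / t))) =
      perturbed_power p u v L t * (p + deviation u v L (ln t)) / t"
    using assms by (simp add: perturbed_power_def powr_diff field_simps)
  ultimately show ?thesis
    by (rule_tac has_field_derivative_transform_within_open [where S = "{0<..}"])
      (use assms in \<open>auto simp: perturbed_power_def\<close>)
qed

lemma elasticity_perturbed_power: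
  assumes "0 < L" "0 < t"
  shows "t * right_deriv (perturbed_power p u v L) t / perturbed_power p u v L t = p + deviation u v L (ln t)"
  using DERIV_imp_right_deriv [OF has_real_derivative_perturbed_power [OF assms]] assms
  by (simp add: perturbed_power_def)

lemma upper_exponent_perturbed_power:
  assumes "0 < L" "0 \<le> u" "0 \<le> v"
  shows "upper_exponent (perturbed_power p u v L) = ereal (p + u)"
proof -
  have "upper_exponent (perturbed_power p u v L) = (SUP t\<in>{0<..}. ereal (p + deviation u v L (ln t)))"
    unfolding upper_exponent_def using assms(1) by (simp add: elasticity_perturbed_power)
  also have "\<dots> = ereal (p + u)"
  proof (rule antisym)
    show "(SUP t\<in>{0<..}. ereal (p + deviation u v L (ln t))) \<le> ereal (p + u)"
      using deviation_le [OF assms] by (intro SUP_least) simp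
    have "ereal (p + deviation u v L (ln (exp L))) \<le> (SUP t\<in>{0<..}. ereal (p + deviation u v L (ln t)))"
      by (rule SUP_upper) simp
    then show "ereal (p + u) \<le> (SUP t\<in>{0<..}. ereal (p + deviation u v L (ln t)))"
      using assms(1) by (simp add: deviation_at_L)
  qed
  finally show ?thesis .
qed

lemma lower_exponent_perturbed_power:
  assumes "0 < L" "0 \<le> u" "0 \<le> v"
  shows "lower_exponent (perturbed_power p u v L) = ereal (p - v)"
proof -
  have "lower_exponent (perturbed_power p u v L) = (INF t\<in>{0<..}. ereal (p + deviation u v L (ln t)))"
    unfolding lower_exponent_def using assms(1) by (simp add: elasticity_perturbed_power)
  also have "\<dots> = ereal (p - v)"
  proof (rule antisym)
    show "ereal (p - v) \<le> (INF t\<in>{0<..}. ereal (p + deviation u v L (ln t)))"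
    proof (rule INF_greatest)
      fix t :: real
      show "ereal (p - v) \<le> ereal (p + deviation u v L (ln t))"
        using deviation_ge [OF assms, of "ln t"] by simp
    qed
    have "(INF t\<in>{0<..}. ereal (p + deviation u v L (ln t))) \<le> ereal (p + deviation u v L (ln (exp (- L))))"
      by (rule INF_lower) simp
    then show "(INF t\<in>{0<..}. ereal (p + deviation u v L (ln t))) \<le> ereal (p - v)"
      using assms(1) by (simp add: deviation_at_minus_L)
  qed
  finally show ?thesis .
qed

section \<open>Convexity\<close>

text \<open>The derivative of perturbed_power at e^s, on a half-line of s where the bump has
  multiplier c.\<close>

definition perturbed_power_slope :: "real \<Rightarrow> real \<Rightarrow> real \<Rightarrow> real \<Rightarrow> real" where
  "perturbed_power_slope p c L s = exp ((p - 1) * s + c * (L * bump_integral (s / L))) * (p + c * bump (s / L))"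

lemma perturbed_power_slope_mono:
  assumes "0 < L" "0 \<le> c" "1 < q" "4 * c \<le> L * ((q - 1) * q)" "a \<le> b"
    and above_q: "\<And>s. a \<le> s \<Longrightarrow> s \<le> b \<Longrightarrow> q \<le> p + c * bump (s / L)"
  shows "perturbed_power_slope p c L a \<le> perturbed_power_slope p c L b"
proof -
  define D where "D s = exp ((p - 1) * s + c * (L * bump_integral (s / L))) *
      ((p + c * bump (s / L) - 1) * (p + c * bump (s / L)) +
       c * ((1 - (s / L)\<^sup>2) * exp ((1 - (s / L)\<^sup>2) / 2)) / L)" for s
  have deriv: "(perturbed_power_slope p c L has_real_derivative D s) (at s)" for s
  proof -
    have "((\<lambda>s. bump (s / L)) has_real_derivative
        (1 - (s / L)\<^sup>2) * exp ((1 - (s / L)\<^sup>2) / 2) * (1 / L)) (at s)"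
      by (rule DERIV_chain2 [OF has_real_derivative_bump])
        (use assms(1) in \<open>auto intro!: derivative_eq_intros\<close>)
    from DERIV_add [OF DERIV_const DERIV_cmult [OF this]]
    have factor: "((\<lambda>s. p + c * bump (s / L)) has_real_derivative
        c * ((1 - (s / L)\<^sup>2) * exp ((1 - (s / L)\<^sup>2) / 2) * (1 / L))) (at s)"
      by simp
    from DERIV_add [OF DERIV_cmult [OF DERIV_ident] has_real_derivative_scaled_bump_integral [OF assms(1)]]
    have exponent: "((\<lambda>s. (p - 1) * s + c * (L * bump_integral (s / L))) has_real_derivative
        p - 1 + c * bump (s / L)) (at s)"
      by simp
    have collect: "e * (p - 1 + c * z) * (p + c * z) + c * ((1 - w) * x * (1 / L)) * e =
        e * ((p + c * z - 1) * (p + c * z) + c * ((1 - w) * x) / L)" for e w x z :: real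
      by (simp add: divide_inverse algebra_simps)
    from DERIV_mult [OF DERIV_chain2 [OF DERIV_exp exponent] factor] show ?thesis
      unfolding perturbed_power_slope_def D_def by (rule DERIV_cong) (rule collect)
  qed
  show ?thesis
  proof (rule DERIV_nonneg_imp_increasing_open [OF \<open>a \<le> b\<close>])
    fix s
    assume s: "a < s" "s < b"
    define y where "y = p + c * bump (s / L)"
    have "q \<le> y"
      using above_q s by (simp add: y_def)
    then have "(q - 1) * q \<le> (y - 1) * y"
      using \<open>1 < q\<close> by (intro mult_mono) auto
    moreover have "- (4 * c) / L \<le> c * ((1 - (s / L)\<^sup>2) * exp ((1 - (s / L)\<^sup>2) / 2)) / L"
      using mult_left_mono [OF bump_derivative_ge [of "s / L"] \<open>0 \<le> c\<close>] \<open>0 < L\<close>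
      by (intro divide_right_mono) simp_all
    moreover have "4 * c / L \<le> (q - 1) * q"
      using assms(1,4) by (simp add: field_simps)
    ultimately have "0 \<le> (y - 1) * y + c * ((1 - (s / L)\<^sup>2) * exp ((1 - (s / L)\<^sup>2) / 2)) / L"
      by linarith
    then have "0 \<le> D s"
      unfolding D_def y_def [symmetric] by simp
    with deriv show "\<exists>y. (perturbed_power_slope p c L has_real_derivative y) (at s) \<and> 0 \<le> y"
      by blast
  next
    show "continuous_on {a..b} (perturbed_power_slope p c L)"
      using deriv by (intro continuous_at_imp_continuous_on ballI DERIV_isCont) auto
  qed
qed

lemma perturbed_power_derivative_eq_slope:
  assumes "0 < t"
  shows "perturbed_power p u v L t * (p + deviation u v L (ln t)) / t =
         perturbed_power_slope p (if 0 \<le> ln t then u else v) L (ln t)"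
proof -
  have "t powr p / t = exp ((p - 1) * ln t)"
    using assms by (simp add: powr_def exp_diff algebra_simps)
  moreover have "perturbed_power p u v L t * (p + deviation u v L (ln t)) / t =
      t powr p / t * exp (log_weight u v L (ln t)) * (p + deviation u v L (ln t))"
    using assms by (simp add: perturbed_power_def)
  ultimately show ?thesis
    by (simp add: perturbed_power_slope_def deviation_def log_weight_def exp_add)
qed

lemma perturbed_power_derivative_mono:
  assumes "0 < L" "0 \<le> u" "0 \<le> v" "1 < p - v"
    and "4 * u \<le> L * ((p - v - 1) * (p - v))" "4 * v \<le> L * ((p - v - 1) * (p - v))"
    and "0 < x" "x \<le> y"
  shows "perturbed_power p u v L x * (p + deviation u v L (ln x)) / x \<le>
         perturbed_power p u v L y * (p + deviation u v L (ln y)) / y"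
proof -
  have right: "perturbed_power_slope p u L a \<le> perturbed_power_slope p u L b" if "0 \<le> a" "a \<le> b" for a b
  proof (rule perturbed_power_slope_mono [OF assms(1,2,4,5) \<open>a \<le> b\<close>])
    fix s
    assume "a \<le> s"
    then have "0 \<le> u * bump (s / L)"
      using that assms(1,2) bump_nonneg [of "s / L"] by simp
    with \<open>0 \<le> v\<close> show "p - v \<le> p + u * bump (s / L)"
      by linarith
  qed
  have left: "perturbed_power_slope p v L a \<le> perturbed_power_slope p v L b" if "a \<le> b" for a b
  proof (rule perturbed_power_slope_mono [OF assms(1,3,4,6) \<open>a \<le> b\<close>])
    fix s
    have "v * (- 1) \<le> v * bump (s / L)"
      using assms(3) abs_bump_le_1 [of "s / L"] by (intro mult_left_mono) auto
    then show "p - v \<le> p + v * bump (s / L)"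
      by linarith
  qed
  have "ln x \<le> ln y"
    using assms(7,8) by simp
  then have "perturbed_power_slope p (if 0 \<le> ln x then u else v) L (ln x) \<le>
             perturbed_power_slope p (if 0 \<le> ln y then u else v) L (ln y)"
  proof (cases "0 \<le> ln x"; cases "0 \<le> ln y")
    assume "\<not> 0 \<le> ln x" "0 \<le> ln y"
    have "perturbed_power_slope p v L (ln x) \<le> perturbed_power_slope p v L 0"
      using \<open>\<not> 0 \<le> ln x\<close> by (intro left) simp
    also have "\<dots> = perturbed_power_slope p u L 0"
      by (simp add: perturbed_power_slope_def)
    also have "\<dots> \<le> perturbed_power_slope p u L (ln y)"
      using \<open>0 \<le> ln y\<close> by (intro right) simp_all
    finally show ?thesis
      using \<open>\<not> 0 \<le> ln x\<close> \<open>0 \<le> ln y\<close> by simp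
  qed (auto intro: left right)
  then show ?thesis
    using assms(7,8) by (simp add: perturbed_power_derivative_eq_slope)
qed

lemma convex_on_perturbed_power:
  assumes "0 < L" "0 \<le> u" "0 \<le> v" "1 < p - v"
    and "4 * u \<le> L * ((p - v - 1) * (p - v))" "4 * v \<le> L * ((p - v - 1) * (p - v))"
  shows "convex_on {0..} (perturbed_power p u v L)"
proof -
  define \<Phi>' where
    "\<Phi>' t = (if t \<le> 0 then 0 else perturbed_power p u v L t * (p + deviation u v L (ln t)) / t)" for t
  \<comment> \<open>Being zero on the negative reals and O(t^p) with p > 1 at 0, the function is
    differentiable on all of the real line, so the derivative criterion applies on UNIV.\<close>
  have "convex_on UNIV (perturbed_power p u v L)"
  proof (rule convex_on_realI)
    fix t :: real
    consider "t < 0" | "t = 0" | "0 < t"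
      by linarith
    then show "(perturbed_power p u v L has_real_derivative \<Phi>' t) (at t)"
    proof cases
      case 1
      have "(perturbed_power p u v L has_real_derivative 0) (at t)"
        by (rule has_field_derivative_transform_within_open [OF DERIV_const, where S = "{..<0}"])
          (use 1 in \<open>auto simp: perturbed_power_def\<close>)
      with 1 show ?thesis
        by (simp add: \<Phi>'_def)
    next
      case 2
      have "(perturbed_power p u v L has_real_derivative 0) (at 0)"
      proof (rule has_real_derivative_zero_at_zeroI)
        show "\<bar>perturbed_power p u v L s\<bar> \<le> exp (2 * L * (u + v)) * s powr p" if "0 < s" for s
          unfolding abs_le_iff using perturbed_power_bounds [OF assms(1-3), of s p] powr_ge_zero [of s p] that
          by linarith
      qed (use assms(3,4) in \<open>auto simp: perturbed_power_def\<close>)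
      with 2 show ?thesis
        by (simp add: \<Phi>'_def)
    next
      case 3
      with has_real_derivative_perturbed_power [OF assms(1) 3] show ?thesis
        by (simp add: \<Phi>'_def)
    qed
  next
    fix x y :: real
    assume "x \<le> y"
    show "\<Phi>' x \<le> \<Phi>' y"
    proof (cases "0 < x")
      case True
      with perturbed_power_derivative_mono [OF assms True \<open>x \<le> y\<close>] \<open>x \<le> y\<close>
      show ?thesis
        by (simp add: \<Phi>'_def)
    next
      case False
      have "0 \<le> p + deviation u v L (ln y)"
        using deviation_ge [OF assms(1-3), of "ln y"] assms(4) by linarith
      with False show ?thesis
        by (simp add: \<Phi>'_def perturbed_power_def)
    qed
  qed simp
  then show ?thesis
    by (rule convex_on_subset) simp_all
qed

lemma young_function_perturbed_power:
  assumes "0 < L" "0 \<le> u" "0 \<le> v" "1 < p - v"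
    and "4 * u \<le> L * ((p - v - 1) * (p - v))" "4 * v \<le> L * ((p - v - 1) * (p - v))"
  shows "young_function (perturbed_power p u v L)"
  unfolding young_function_def
proof (intro conjI allI impI)
  show "convex_on {0..} (perturbed_power p u v L)"
    by (rule convex_on_perturbed_power [OF assms])
  have "\<forall>\<^sub>F t in at_top. t \<le> perturbed_power p u v L t"
    using eventually_ge_at_top [of 1]
  proof eventually_elim
    case (elim t)
    have "t \<le> t powr p"
      using powr_mono [of 1 p t] elim assms(3,4) by simp
    also have "\<dots> \<le> perturbed_power p u v L t"
      using perturbed_power_bounds [OF assms(1-3)] elim by simp
    finally show ?case .
  qed
  then show "filterlim (perturbed_power p u v L) at_top at_top"
    by (rule filterlim_at_top_mono [OF filterlim_ident])
qed (simp_all add: perturbed_power_def)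

theorem mainTheorem7:
  fixes p1 p p2 :: real
  assumes "1 < p1" and "p1 < p" and "p < p2"
  shows "\<exists>\<Phi>. young_function \<Phi> \<and>
           (orlicz_space \<Phi> :: ('a::euclidean_space \<Rightarrow> real) set) = Lp_space p \<and>
           lower_exponent \<Phi> = ereal p1 \<and> upper_exponent \<Phi> = ereal p2"
proof -
  define u where "u = p2 - p"
  define v where "v = p - p1"
  define L where "L = 4 * (u + v + 1) / ((p1 - 1) * p1)"
  have "0 < (p1 - 1) * p1" "0 \<le> u" "0 \<le> v" "p - v = p1"
    using assms by (simp_all add: u_def v_def)
  then have params: "0 < L" "0 \<le> u" "0 \<le> v" "1 < p - v"
    "4 * u \<le> L * ((p - v - 1) * (p - v))" "4 * v \<le> L * ((p - v - 1) * (p - v))"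
    using assms by (simp_all add: L_def)
  have "(orlicz_space (perturbed_power p u v L) :: ('a \<Rightarrow> real) set) = Lp_space p"
    using perturbed_power_bounds [OF params(1-3)] assms
    by (intro antisym orlicz_space_subset_Lp_space [of 1]
        Lp_space_subset_orlicz_space [of _ "exp (2 * L * (u + v))"]) auto
  with young_function_perturbed_power [OF params] lower_exponent_perturbed_power [OF params(1-3)]
    upper_exponent_perturbed_power [OF params(1-3)] \<open>p - v = p1\<close>
  show ?thesis
    by (intro exI [of _ "perturbed_power p u v L"]) (simp add: u_def)
qed

end
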